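(* Let $G$ be a finite graph with ordered edges and let $H^i(G)$ be the cohomology of its chain complex $\mathcal{C}(G)$ (defined in the context). Then $$\sum_{i\ge 0}(-1)^i\, q\dim H^i(G) \;=\; P_G(1+q),$$ where $P_G(\lambda)$ is the chromatic polynomial of $G$.
   Context: Graphs are finite; loops and multiple edges are allowed. $P_G(\lambda)$ is the chromatic polynomial: for a positive integer $\lambda$, $P_G(\lambda)$ is the number of assignments of colors $\{1,\dots,\lambda\}$ to vertices such that the endpoints of every edge receive different colors (equivalently $P_G(\lambda)=\sum_{s\subseteq E}(-1)^{|s|}\lambda^{k(s)}$, $k(s)$ the number of components of $[G:s]$). For a graded $\mathbb{Z}$-module $\mathcal{M}=\bigoplus_j M_j$, $q\dim\mathcal{M}=\sum_j q^j\operatorname{rank}(M_j)$ with $\operatorname{rank}(M_j)=\dim_{\mathbb{Q}}(M_j\otimes\mathbb{Q})$. For $G=(V,E)$ and $s\subseteq E$, $[G:s]$ is the spanning subgraph with edge set $s$. With $1*1=1$, $1*x=x*1=x$, $x*x=0$: an enhanced state is $S=(s,c)$, $s\subseteq E$, $c$ assigning $1$ or $x$ to each component of $[G:s]$; $i(S)=|s|$, $j(S)=$ number of components colored $x$. $C^{i,j}(G)$ is free abelian on enhanced states with $i(S)=i,j(S)=j$; $C^i(G)=\bigoplus_jC^{i,j}(G)$ graded by $j$. For an ordering of the edges, $d(S)=\sum_{e\in E\setminus s}(-1)^{n(e)}S_e$, $n(e)$ the number of edges of $s$ before $e$; $S_e=(s\cup\{e\},c_e)$ where, if $e$ joins a component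 to itself, colors are unchanged, and if $e$ joins distinct components $E_1,E_2$ the merged component gets $c(E_1)*c(E_2)$ (and $S_e=0$ if this product is $0$). $H^{i,j}(G)$ is the cohomology of $(C^{\bullet,j}(G),d)$ and $H^i(G)=\bigoplus_j H^{i,j}(G)$, graded by $j$. *)

theory Defs
  imports "HOL-Computational_Algebra.Polynomial"
begin

text \<open>A finite graph (loops and multiple edges allowed) is given by a finite vertex
set V and a list of edges es; edge number k (k < length es) joins fst (es!k) and
snd (es!k).  The list order is the ordering of the edges.  A subset s of edges is
a set of edge indices s \<subseteq> {..<length es}.\<close>

definition edge_rel :: "('v \<times> 'v) list \<Rightarrow> nat set \<Rightarrow> ('v \<times> 'v) set" where
  "edge_rel es s = {(fst (es!k), snd (es!k)) | k. k \<in> s \<and> k < length es}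
                 \<union> {(snd (es!k), fst (es!k)) | k. k \<in> s \<and> k < length es}"

definition comp_rel :: "'v set \<Rightarrow> ('v \<times> 'v) list \<Rightarrow> nat set \<Rightarrow> ('v \<times> 'v) set" where
  "comp_rel V es s = {(u, w). u \<in> V \<and> w \<in> V \<and> (u, w) \<in> (edge_rel es s)\<^sup>*}"

definition comps :: "'v set \<Rightarrow> ('v \<times> 'v) list \<Rightarrow> nat set \<Rightarrow> 'v set set" where
  "comps V es s = V // comp_rel V es s"

definition comp_of :: "'v set \<Rightarrow> ('v \<times> 'v) list \<Rightarrow> nat set \<Rightarrow> 'v \<Rightarrow> 'v set" where
  "comp_of V es s v = comp_rel V es s `` {v}"

definition chromatic_poly :: "'v set \<Rightarrow> ('v \<times> 'v) list \<Rightarrow> int poly" where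
  "chromatic_poly V es =
     (\<Sum>s\<in>Pow {..<length es}. monom ((-1) ^ card s) (card (comps V es s)))"

text \<open>Enhanced states: (s, X) where X is the set of components of [G:s] coloured x
(the remaining components are coloured 1).  i(S) = card s, j(S) = card X.\<close>
type_synonym 'v state = "nat set \<times> 'v set set"

definition states :: "'v set \<Rightarrow> ('v \<times> 'v) list \<Rightarrow> nat \<Rightarrow> nat \<Rightarrow> 'v state set" where
  "states V es i j = {(s, X). s \<subseteq> {..<length es} \<and> X \<subseteq> comps V es s
                              \<and> card s = i \<and> card X = j}"

text \<open>S_e: None encodes the zero result (x*x = 0).\<close>
definition state_e :: "'v set \<Rightarrow> ('v \<times> 'v) list \<Rightarrow> 'v state \<Rightarrow> nat \<Rightarrow> 'v state option" where
  "state_e V es S e =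
     (let s = fst S; X = snd S;
          C1 = comp_of V es s (fst (es!e)); C2 = comp_of V es s (snd (es!e))
      in if C1 = C2 then Some (insert e s, X)
         else if C1 \<in> X \<and> C2 \<in> X then None
         else if C1 \<in> X \<or> C2 \<in> X then Some (insert e s, insert (C1 \<union> C2) (X - {C1, C2}))
         else Some (insert e s, X - {C1, C2}))"

definition nbefore :: "nat set \<Rightarrow> nat \<Rightarrow> nat" where
  "nbefore s e = card {k \<in> s. k < e}"

text \<open>Chains: integer-valued functions on states (finite formal Z-combinations).
C^{i,j}(G) is the set of chains supported on the states of bidegree (i,j).\<close>
type_synonym 'v chain = "'v state \<Rightarrow> int"

definition chains :: "'v set \<Rightarrow> ('v \<times> 'v) list \<Rightarrow> nat \<Rightarrow> nat \<Rightarrow> 'v chain set" where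
  "chains V es i j = {f. \<forall>T. f T \<noteq> 0 \<longrightarrow> T \<in> states V es i j}"

definition diff :: "'v set \<Rightarrow> ('v \<times> 'v) list \<Rightarrow> 'v chain \<Rightarrow> 'v chain" where
  "diff V es f = (\<lambda>T. \<Sum>S\<in>{S. S \<in> (\<Union>i j. states V es i j)}.
       \<Sum>e\<in>{e. e < length es \<and> e \<notin> fst S}.
          (if state_e V es S e = Some T then f S * (-1) ^ nbefore (fst S) e else 0))"

definition cycles :: "'v set \<Rightarrow> ('v \<times> 'v) list \<Rightarrow> nat \<Rightarrow> nat \<Rightarrow> 'v chain set" where
  "cycles V es i j = {f \<in> chains V es i j. diff V es f = (\<lambda>_. 0)}"

definition boundaries :: "'v set \<Rightarrow> ('v \<times> 'v) list \<Rightarrow> nat \<Rightarrow> nat \<Rightarrow> 'v chain set" where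
  "boundaries V es i j = (if i = 0 then {\<lambda>_. 0} else diff V es ` chains V es (i - 1) j)"

text \<open>Rank of the quotient Z-module A/B (B \<subseteq> A submodules of chains): the maximal
number of elements of A whose classes in A/B are Z-linearly independent
(= dim_Q (A/B \<otimes> Q)).\<close>
definition quot_rank :: "('a \<Rightarrow> int) set \<Rightarrow> ('a \<Rightarrow> int) set \<Rightarrow> nat" where
  "quot_rank A B = Max {card S | S. finite S \<and> S \<subseteq> A \<and>
      (\<forall>a :: ('a \<Rightarrow> int) \<Rightarrow> int. (\<lambda>T. \<Sum>x\<in>S. a x * x T) \<in> B \<longrightarrow> (\<forall>x\<in>S. a x = 0))}"

definition hom_rank :: "'v set \<Rightarrow> ('v \<times> 'v) list \<Rightarrow> nat \<Rightarrow> nat \<Rightarrow> nat" where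
  "hom_rank V es i j = quot_rank (cycles V es i j) (boundaries V es i j)"

text \<open>q dim H^i(G) as an integer polynomial in q (j \<le> card V covers all degrees).\<close>
definition qdim_H :: "'v set \<Rightarrow> ('v \<times> 'v) list \<Rightarrow> nat \<Rightarrow> int poly" where
  "qdim_H V es i = (\<Sum>j\<le>card V. monom (int (hom_rank V es i j)) j)"

end

(*
  Encode an enhanced state as (s, X), where X is the set of components of [G:s] coloured x.
  Adding an edge e pushes X forward along the map sending a component of [G:s] to the
  component of [G:s+e] containing it, and the product x*x = 0 occurs exactly when this map is
  not injective on X. Hence adding two edges in either order gives the same state, and the
  signs (-1)^n(e) make d o d = 0. Over Q, rank-nullity and a comparison of the integral rank
  of H^{i,j} with dim Z^{i,j} - dim B^{i,j} show that the alternating sum of the ranks of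
  H^{i,j} equals the alternating count of states of bidegree (i,j). Summing q^j over the
  colourings of the k(s) components of [G:s] gives (1+q)^k(s), so the graded Euler
  characteristic is the sum over s of (-1)^|s| (1+q)^k(s), which is P_G(1+q).
*)
theory Submission
  imports Defs "HOL-Library.Function_Algebras"
begin

section \<open>Dimension counting in vector spaces\<close>

context vector_space
begin

lemma coeffs_zero_if_sum_in_span:
  assumes indep: "independent (T \<union> B)" and disj: "T \<inter> B = {}"
    and fin: "finite T" "finite B"
    and in_span: "(\<Sum>t\<in>T. u t *s t) \<in> span B"
  shows "\<forall>t\<in>T. u t = 0"
proof -
  obtain w where w: "(\<Sum>t\<in>T. u t *s t) = (\<Sum>b\<in>B. w b *s b)"
    using in_span span_finite[OF fin(2)] by blast
  define c where "c x = (if x \<in> T then u x else - w x)" for x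
  have "(\<Sum>x\<in>B. c x *s x) = - (\<Sum>b\<in>B. w b *s b)"
    unfolding sum_negf[symmetric] using disj by (intro sum.cong) (auto simp: c_def scale_minus_left)
  then have "(\<Sum>x\<in>T \<union> B. c x *s x) = (\<Sum>t\<in>T. u t *s t) - (\<Sum>b\<in>B. w b *s b)"
    using disj by (simp add: sum.union_disjoint[OF fin] c_def)
  then have "(\<Sum>x\<in>T \<union> B. c x *s x) = 0"
    using w by simp
  then have "c t = 0" if "t \<in> T" for t
    using independentD[OF indep _ subset_refl] fin that by blast
  then show ?thesis
    by (auto simp: c_def)
qed

lemma finite_basis_of_subset_span:
  assumes "W \<subseteq> span G" "finite G"
  obtains B where "B \<subseteq> W" "independent B" "W \<subseteq> span B" "finite B" "card B = dim W"
proof -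
  obtain B where B: "B \<subseteq> W" "independent B" "W \<subseteq> span B"
    using maximal_independent_subset by blast
  moreover have "finite B"
    using independent_span_bound[OF assms(2) B(2)] B(1) assms(1) by blast
  ultimately show thesis
    using that basis_card_eq_dim by blast
qed

lemma exists_complement_independent_modulo:
  assumes "K \<subseteq> W" "W \<subseteq> span G" "finite G"
  obtains T where "finite T" "T \<subseteq> W" "independent T" "card T + dim K = dim W" "W \<subseteq> span (T \<union> K)"
    and "\<And>u. (\<Sum>t\<in>T. u t *s t) \<in> span K \<Longrightarrow> \<forall>t\<in>T. u t = 0"
proof -
  obtain BK where BK: "BK \<subseteq> K" "independent BK" "K \<subseteq> span BK" "finite BK" "card BK = dim K"
    using finite_basis_of_subset_span[of K G] assms by blast
  obtain BW where BW: "BK \<subseteq> BW" "BW \<subseteq> W" "independent BW" "W \<subseteq> span BW"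
    using maximal_independent_subset_extend[of BK W] BK assms(1) by blast
  have "finite BW"
    using independent_span_bound[OF assms(3) BW(3)] BW(2) assms(2) by blast
  have "card BW = dim W"
    using basis_card_eq_dim BW(2-4) by blast
  define T where "T = BW - BK"
  have span_K: "span K = span BK"
    using BK(1,3) by (simp add: span_eq span_superset subset_trans)
  show thesis
  proof
    show "finite T" "T \<subseteq> W" "independent T"
      using \<open>finite BW\<close> BW(2) independent_mono[OF BW(3)] by (auto simp: T_def)
    show "card T + dim K = dim W"
      using card_Diff_subset[OF BK(4) BW(1)] card_mono[OF \<open>finite BW\<close> BW(1)] \<open>card BW = dim W\<close> BK(5)
      by (simp add: T_def)
    have "span BW \<subseteq> span (T \<union> K)"
      using BK(1) by (intro span_mono) (auto simp: T_def)
    then show "W \<subseteq> span (T \<union> K)"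
      using BW(4) by blast
    fix u assume "(\<Sum>t\<in>T. u t *s t) \<in> span K"
    moreover have "T \<union> BK = BW" "T \<inter> BK = {}" "finite T"
      using BW(1) \<open>finite BW\<close> by (auto simp: T_def)
    ultimately show "\<forall>t\<in>T. u t = 0"
      using coeffs_zero_if_sum_in_span[of T BK u] BW(3) BK(4) span_K by simp
  qed
qed

lemma card_add_dim_le_if_independent_modulo:
  assumes fin: "finite S" and sub: "S \<subseteq> W" "K \<subseteq> W" and W: "W \<subseteq> span G" "finite G"
    and indep_mod: "\<And>u. (\<Sum>s\<in>S. u s *s s) \<in> span K \<Longrightarrow> \<forall>s\<in>S. u s = 0"
  shows "card S + dim K \<le> dim W"
proof -
  obtain BK where BK: "BK \<subseteq> K" "independent BK" "K \<subseteq> span BK" "finite BK" "card BK = dim K"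
    using finite_basis_of_subset_span[of K G] sub(2) W by blast
  obtain BW where BW: "independent BW" "W \<subseteq> span BW" "finite BW" "card BW = dim W"
    using finite_basis_of_subset_span[OF W] by blast
  have BK_span: "BK \<subseteq> span K"
    using BK(1) span_superset by blast
  have disj: "S \<inter> BK = {}"
  proof (rule ccontr)
    assume "S \<inter> BK \<noteq> {}"
    then obtain s where s: "s \<in> S" "s \<in> BK" by blast
    have "(\<Sum>x\<in>S. (if x = s then 1 else 0) *s x) = s"
      using fin s(1) by (simp add: if_distrib[of "\<lambda>c. c *s _"] sum.delta' cong: if_cong)
    moreover have "s \<in> span K"
      using s(2) BK_span by blast
    ultimately show False
      using indep_mod[of "\<lambda>x. if x = s then 1 else 0"] s(1) by auto
  qed
  have "independent (S \<union> BK)"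
  proof (rule independent_if_scalars_zero)
    show "finite (S \<union> BK)"
      using fin BK(4) by simp
    fix c x assume sum0: "(\<Sum>x\<in>S \<union> BK. c x *s x) = 0" and x: "x \<in> S \<union> BK"
    have split: "(\<Sum>x\<in>S. c x *s x) = - (\<Sum>x\<in>BK. c x *s x)"
      using sum0 by (simp add: sum.union_disjoint[OF fin BK(4) disj] eq_neg_iff_add_eq_0)
    have "- (\<Sum>x\<in>BK. c x *s x) \<in> span K"
      using BK_span
      by (intro span_neg span_sum span_scale) (auto intro: span_mono[of BK "span K", simplified])
    then have on_S: "\<forall>s\<in>S. c s = 0"
      using indep_mod split by simp
    then have "(\<Sum>x\<in>BK. c x *s x) = 0"
      using split by simp
    then show "c x = 0"
      using x on_S independentD[OF BK(2) BK(4) subset_refl] by blast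
  qed
  moreover have "S \<union> BK \<subseteq> span BW"
    using sub BK(1) BW(2) by blast
  ultimately have "card (S \<union> BK) \<le> card BW"
    using independent_span_bound[OF BW(3)] by blast
  moreover have "card (S \<union> BK) = card S + card BK"
    by (rule card_Un_disjoint[OF fin BK(4) disj])
  ultimately show ?thesis
    using BK(5) BW(4) by linarith
qed

end

lemma (in vector_space_pair) dim_eq_dim_kernel_add_dim_image:
  assumes f: "Vector_Spaces.linear s1 s2 f" and W: "vs1.subspace W" "W \<subseteq> vs1.span G" "finite G"
  shows "vs1.dim W = vs1.dim {w\<in>W. f w = 0} + vs2.dim (f ` W)"
proof -
  let ?K = "{w\<in>W. f w = 0}"
  obtain T where T: "finite T" "T \<subseteq> W" "vs1.independent T" "card T + vs1.dim ?K = vs1.dim W"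
    "W \<subseteq> vs1.span (T \<union> ?K)"
    and indep_mod: "\<And>u. (\<Sum>t\<in>T. u t *a t) \<in> vs1.span ?K \<Longrightarrow> \<forall>t\<in>T. u t = 0"
    by (rule vs1.exists_complement_independent_modulo[of ?K W G]) (use W in auto)
  have "x = 0" if x: "x \<in> vs1.span T" "f x = 0" for x
  proof -
    obtain u where u: "x = (\<Sum>t\<in>T. u t *a t)"
      using x(1) vs1.span_finite[OF T(1)] by blast
    have "x \<in> W"
      using x(1) vs1.span_minimal[OF T(2) W(1)] by blast
    then have "x \<in> vs1.span ?K"
      using x(2) by (simp add: vs1.span_base)
    then show "x = 0"
      using indep_mod[of u] unfolding u by simp
  qed
  then have inj: "inj_on f (vs1.span T)"
    using linear_inj_on_iff_eq_0[OF f vs1.subspace_span] by blast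
  then have "card (f ` T) = card T"
    using card_image inj_on_subset[OF inj vs1.span_superset] by blast
  moreover have "vs2.independent (f ` T)"
    using linear_independent_injective_image[OF f T(3) inj] .
  moreover have "f ` W \<subseteq> vs2.span (f ` T)"
  proof -
    have "f ` T \<subseteq> vs2.span (f ` T)" "f ` ?K \<subseteq> {0}"
      using vs2.span_superset by auto
    then have "f ` (T \<union> ?K) \<subseteq> vs2.span (f ` T)"
      using vs2.span_zero by (auto simp only: image_Un)
    then have "vs2.span (f ` (T \<union> ?K)) \<subseteq> vs2.span (f ` T)"
      by (simp add: vs2.span_minimal)
    then have "f ` vs1.span (T \<union> ?K) \<subseteq> vs2.span (f ` T)"
      by (simp add: linear_span_image[OF f])
    then show ?thesis
      using T(5) by blast
  qed
  moreover have "f ` T \<subseteq> f ` W"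
    using T(2) by (rule image_mono)
  ultimately have "card T = vs2.dim (f ` W)"
    using vs2.basis_card_eq_dim[of "f ` T" "f ` W"] by simp
  then show ?thesis
    using T(4) by simp
qed

section \<open>Rational-valued functions and integer lattices\<close>

text \<open>Rational-valued functions on a type model the rationalised chain groups; of_int_fun
  embeds the integer-valued ones.\<close>

definition scaleQ :: "rat \<Rightarrow> ('a \<Rightarrow> rat) \<Rightarrow> 'a \<Rightarrow> rat" where
  "scaleQ c f = (\<lambda>x. c * f x)"

lemma scaleQ_apply [simp]: "scaleQ c f x = c * f x"
  by (simp add: scaleQ_def)

global_interpretation Q: vector_space scaleQ
  by unfold_locales (auto simp: scaleQ_def algebra_simps)

global_interpretation QQ: vector_space_pair scaleQ scaleQ ..

lemma Q_dim_zero: "Q.dim {0} = 0"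
  by (metis Q.dim_span Q.span_empty Q.dim_eq_card_independent Q.independent_empty card.empty)

lemma sum_fun_apply: "sum f S x = (\<Sum>y\<in>S. f y x)"
  by (induct S rule: infinite_finite_induct) auto

definition of_int_fun :: "('a \<Rightarrow> int) \<Rightarrow> 'a \<Rightarrow> rat" where
  "of_int_fun f = (\<lambda>x. of_int (f x))"

lemma of_int_fun_eq_iff [simp]: "of_int_fun f = of_int_fun g \<longleftrightarrow> f = g"
  by (simp add: of_int_fun_def fun_eq_iff)

lemma inj_of_int_fun: "inj_on of_int_fun S"
  by (simp add: inj_on_def)

lemma of_int_fun_zero [simp]: "of_int_fun (\<lambda>_. 0) = 0" "of_int_fun 0 = 0"
  by (simp_all add: of_int_fun_def zero_fun_def)

lemma of_int_fun_combination:
  "of_int_fun (\<lambda>x. \<Sum>y\<in>S. a y * y x) = (\<Sum>y\<in>S. scaleQ (of_int (a y)) (of_int_fun y))"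
  by (simp add: of_int_fun_def fun_eq_iff sum_fun_apply)

definition point_fun :: "'a \<Rightarrow> 'a \<Rightarrow> rat" where
  "point_fun x = (\<lambda>y. if y = x then 1 else 0)"

lemma inj_point_fun: "inj_on point_fun S"
  by (rule inj_onI) (metis point_fun_def zero_neq_one)

lemma in_span_point_funs:
  assumes "finite F" and "\<And>x. x \<notin> F \<Longrightarrow> g x = 0"
  shows "g \<in> Q.span (point_fun ` F)"
proof -
  have "g = (\<Sum>x\<in>F. scaleQ (g x) (point_fun x))"
    using assms by (auto simp: fun_eq_iff sum_fun_apply point_fun_def if_distrib cong: if_cong)
  also have "\<dots> \<in> Q.span (point_fun ` F)"
    by (intro Q.span_sum Q.span_scale Q.span_base) auto
  finally show ?thesis .
qed

lemma independent_point_funs: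
  assumes "finite F"
  shows "Q.independent (point_fun ` F)"
proof (rule Q.independent_if_scalars_zero)
  show "finite (point_fun ` F)"
    using assms by simp
  fix c p assume sum0: "(\<Sum>q\<in>point_fun ` F. scaleQ (c q) q) = 0" and "p \<in> point_fun ` F"
  then obtain x where x: "x \<in> F" "p = point_fun x" by blast
  have "0 = (\<Sum>y\<in>F. scaleQ (c (point_fun y)) (point_fun y)) x"
    using sum0 by (simp add: sum.reindex[OF inj_point_fun])
  also have "\<dots> = c p"
    using assms x by (simp add: sum_fun_apply point_fun_def if_distrib cong: if_cong)
  finally show "c p = 0" by simp
qed

lemma rat_common_denominator:
  fixes Y :: "rat set"
  assumes "finite Y"
  shows "\<exists>D::int. D > 0 \<and> (\<forall>q\<in>Y. of_int D * q \<in> \<int>)"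
  using assms
proof (induct Y rule: finite_induct)
  case empty
  show ?case by (intro exI[of _ 1]) simp
next
  case (insert q Y)
  then obtain D where D: "D > 0" "\<forall>r\<in>Y. of_int D * r \<in> \<int>" by blast
  obtain a b where ab: "quotient_of q = (a, b)" by (cases "quotient_of q")
  have "b > 0" "q = of_int a / of_int b"
    using quotient_of_denom_pos[OF ab] quotient_of_div[OF ab] by simp_all
  then have "of_int (D * b) * q = of_int (D * a)"
    by simp
  then have "of_int (D * b) * q \<in> \<int>"
    by (metis Ints_of_int)
  moreover have "of_int (D * b) * r \<in> \<int>" if "r \<in> Y" for r
    using D(2) that by (metis Ints_mult Ints_of_int mult.assoc mult.commute of_int_mult)
  ultimately show ?case
    using D(1) \<open>b > 0\<close> by (intro exI[of _ "D * b"]) auto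
qed

definition int_submodule :: "('a \<Rightarrow> int) set \<Rightarrow> bool" where
  "int_submodule M \<longleftrightarrow> (\<lambda>_. 0) \<in> M \<and> (\<forall>f\<in>M. \<forall>g\<in>M. (\<lambda>x. f x + g x) \<in> M)
     \<and> (\<forall>k. \<forall>f\<in>M. (\<lambda>x. k * f x) \<in> M)"

lemma int_submodule_image:
  assumes M: "int_submodule M"
    and add: "\<And>f g. h (\<lambda>x. f x + g x) = (\<lambda>y. h f y + h g y)"
    and scale: "\<And>k f. h (\<lambda>x. k * f x) = (\<lambda>y. k * h f y)"
  shows "int_submodule (h ` M)"
proof -
  have "h (\<lambda>_. 0) = (\<lambda>_. 0)"
    using scale[of 0 "\<lambda>_. 0"] by simp
  moreover have "(\<lambda>_. 0) \<in> M"
    using M by (simp add: int_submodule_def)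
  ultimately have "(\<lambda>_. 0) \<in> h ` M"
    by (metis imageI)
  moreover have "(\<lambda>y. h f y + h g y) \<in> h ` M" if "f \<in> M" "g \<in> M" for f g
    unfolding add[symmetric] using M that by (intro imageI) (simp add: int_submodule_def)
  moreover have "(\<lambda>y. k * h f y) \<in> h ` M" if "f \<in> M" for k f
    unfolding scale[symmetric] using M that by (intro imageI) (simp add: int_submodule_def)
  ultimately show ?thesis
    unfolding int_submodule_def by blast
qed

lemma int_submodule_saturated:
  assumes M: "int_submodule M" and v: "v \<in> Q.span (of_int_fun ` M)"
  shows "\<exists>D::int. D > 0 \<and> scaleQ (of_int D) v \<in> of_int_fun ` M"
  using v
proof (induct rule: Q.span_induct_alt)
  case base
  have "(\<lambda>_. 0) \<in> M"
    using M by (simp add: int_submodule_def)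
  then have "of_int_fun (\<lambda>_. 0) \<in> of_int_fun ` M"
    by (rule imageI)
  then show ?case
    by (intro exI[of _ 1]) (simp add: scaleQ_def zero_fun_def)
next
  case (step c p v)
  then obtain f where f: "f \<in> M" "p = of_int_fun f" by blast
  obtain D g where D: "D > 0" "g \<in> M" "scaleQ (of_int D) v = of_int_fun g"
    using step.hyps(2) by blast
  obtain a b where ab: "quotient_of c = (a, b)" by (cases "quotient_of c")
  have "b > 0" "c = of_int a / of_int b"
    using quotient_of_denom_pos[OF ab] quotient_of_div[OF ab] by simp_all
  have bc: "of_int b * c = of_int a"
    using \<open>b > 0\<close> \<open>c = _\<close> by simp
  have eq: "scaleQ (of_int (b * D)) (scaleQ c p + v) = of_int_fun (\<lambda>x. (D * a) * f x + b * g x)"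
  proof
    fix x
    have Dv: "of_int D * v x = of_int (g x)"
      using D(3) by (simp add: fun_eq_iff of_int_fun_def)
    have "scaleQ (of_int (b * D)) (scaleQ c p + v) x
        = of_int D * (of_int b * c) * of_int (f x) + of_int b * (of_int D * v x)"
      by (simp add: f(2) of_int_fun_def distrib_left mult_ac)
    also have "\<dots> = of_int_fun (\<lambda>x. (D * a) * f x + b * g x) x"
      by (simp add: bc Dv of_int_fun_def)
    finally show "scaleQ (of_int (b * D)) (scaleQ c p + v) x
        = of_int_fun (\<lambda>x. (D * a) * f x + b * g x) x" .
  qed
  have "(\<lambda>x. (D * a) * f x + b * g x) \<in> M"
    using M f(1) D(2) by (simp add: int_submodule_def)
  then have "scaleQ (of_int (b * D)) (scaleQ c p + v) \<in> of_int_fun ` M"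
    unfolding eq by (rule imageI)
  moreover have "b * D > 0"
    using D(1) \<open>b > 0\<close> by simp
  ultimately show ?case
    by blast
qed

definition independent_modulo :: "('a \<Rightarrow> int) set \<Rightarrow> ('a \<Rightarrow> int) set \<Rightarrow> bool" where
  "independent_modulo B S \<longleftrightarrow> (\<forall>a. (\<lambda>x. \<Sum>y\<in>S. a y * y x) \<in> B \<longrightarrow> (\<forall>y\<in>S. a y = 0))"

lemma quot_rank_eq_Max:
  "quot_rank A B = Max {card S | S. finite S \<and> S \<subseteq> A \<and> independent_modulo B S}"
  by (simp add: quot_rank_def independent_modulo_def)

lemma independent_modulo_rational:
  assumes B: "int_submodule B" and S: "finite S" "independent_modulo B S"
    and in_span: "(\<Sum>y\<in>S. scaleQ (u y) (of_int_fun y)) \<in> Q.span (of_int_fun ` B)"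
  shows "\<forall>y\<in>S. u y = 0"
proof -
  obtain D :: int where D: "D > 0" "\<forall>q\<in>u ` S. of_int D * q \<in> \<int>"
    using rat_common_denominator[OF finite_imageI[OF S(1)]] by blast
  have ints: "\<forall>y\<in>S. \<exists>k::int. of_int D * u y = of_int k"
  proof
    fix y assume "y \<in> S"
    then have "of_int D * u y \<in> \<int>"
      using D(2) by blast
    then show "\<exists>k::int. of_int D * u y = of_int k"
      by (elim Ints_cases) blast
  qed
  obtain n where n: "\<forall>y\<in>S. of_int D * u y = of_int (n y)"
    using bchoice[OF ints] by blast
  have "scaleQ (of_int D) (\<Sum>y\<in>S. scaleQ (u y) (of_int_fun y)) = of_int_fun (\<lambda>x. \<Sum>y\<in>S. n y * y x)"
    unfolding of_int_fun_combination Q.scale_sum_right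
    using n by (intro sum.cong) (simp_all add: fun_eq_iff)
  then have "of_int_fun (\<lambda>x. \<Sum>y\<in>S. n y * y x) \<in> Q.span (of_int_fun ` B)"
    using Q.span_scale[OF in_span, of "of_int D"] by simp
  then obtain D' b where D': "D' > 0" "b \<in> B"
    "scaleQ (of_int D') (of_int_fun (\<lambda>x. \<Sum>y\<in>S. n y * y x)) = of_int_fun b"
    using int_submodule_saturated[OF B] by blast
  then have "of_int_fun (\<lambda>x. \<Sum>y\<in>S. (D' * n y) * y x) = of_int_fun b"
    by (simp add: of_int_fun_combination Q.scale_sum_right)
  then have "(\<lambda>x. \<Sum>y\<in>S. (D' * n y) * y x) = b"
    by (simp only: of_int_fun_eq_iff)
  then have "(\<lambda>x. \<Sum>y\<in>S. (D' * n y) * y x) \<in> B"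
    using D'(2) by simp
  then have "\<forall>y\<in>S. D' * n y = 0"
    using S(2)[unfolded independent_modulo_def, rule_format, of "\<lambda>y. D' * n y"] by blast
  then show ?thesis
    using n D(1) D'(1) by simp
qed

lemma independent_modulo_card_add_dim_le:
  assumes B: "int_submodule B" "B \<subseteq> A" and A: "of_int_fun ` A \<subseteq> Q.span G" "finite G"
    and S: "finite S" "S \<subseteq> A" "independent_modulo B S"
  shows "card S + Q.dim (of_int_fun ` B) \<le> Q.dim (of_int_fun ` A)"
proof -
  have "card (of_int_fun ` S) + Q.dim (of_int_fun ` B) \<le> Q.dim (of_int_fun ` A)"
  proof (rule Q.card_add_dim_le_if_independent_modulo[OF _ _ _ A])
    fix u assume "(\<Sum>t\<in>of_int_fun ` S. scaleQ (u t) t) \<in> Q.span (of_int_fun ` B)"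
    then have "(\<Sum>y\<in>S. scaleQ (u (of_int_fun y)) (of_int_fun y)) \<in> Q.span (of_int_fun ` B)"
      by (simp add: sum.reindex[OF inj_of_int_fun])
    then have "\<forall>y\<in>S. u (of_int_fun y) = 0"
      by (rule independent_modulo_rational[OF B(1) S(1,3)])
    then show "\<forall>t\<in>of_int_fun ` S. u t = 0"
      by blast
  qed (use S B(2) in auto)
  moreover have "card (of_int_fun ` S) = card S"
    by (rule card_image[OF inj_of_int_fun])
  ultimately show ?thesis
    by linarith
qed

lemma exists_independent_modulo:
  assumes B: "B \<subseteq> A" and A: "of_int_fun ` A \<subseteq> Q.span G" "finite G"
  obtains S where "finite S" "S \<subseteq> A" "independent_modulo B S"
    "card S + Q.dim (of_int_fun ` B) = Q.dim (of_int_fun ` A)"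
proof -
  let ?B = "of_int_fun ` B"
  obtain T where T: "finite T" "T \<subseteq> of_int_fun ` A" "Q.independent T"
    "card T + Q.dim ?B = Q.dim (of_int_fun ` A)" "of_int_fun ` A \<subseteq> Q.span (T \<union> ?B)"
    and T_indep: "\<And>u. (\<Sum>t\<in>T. scaleQ (u t) t) \<in> Q.span ?B \<Longrightarrow> \<forall>t\<in>T. u t = 0"
    by (rule Q.exists_complement_independent_modulo[of ?B "of_int_fun ` A" G]) (use A B in auto)
  define S where "S = {f\<in>A. of_int_fun f \<in> T}"
  have S_image: "of_int_fun ` S = T"
    using T(2) by (auto simp: S_def)
  then have "finite S" "card S = card T"
    using T(1) finite_imageD[OF _ inj_of_int_fun] card_image[OF inj_of_int_fun[of S]] by auto
  moreover have "independent_modulo B S"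
    unfolding independent_modulo_def
  proof (intro allI impI)
    fix a assume "(\<lambda>x. \<Sum>y\<in>S. a y * y x) \<in> B"
    then have in_span: "of_int_fun (\<lambda>x. \<Sum>y\<in>S. a y * y x) \<in> Q.span ?B"
      by (intro Q.span_base imageI)
    define u :: "('a \<Rightarrow> rat) \<Rightarrow> rat" where "u t = of_int (a (inv_into S of_int_fun t))" for t
    have "(\<Sum>t\<in>T. scaleQ (u t) t) = of_int_fun (\<lambda>x. \<Sum>y\<in>S. a y * y x)"
      unfolding S_image[symmetric] sum.reindex[OF inj_of_int_fun] of_int_fun_combination
      by (intro sum.cong) (simp_all add: u_def inv_into_f_f[OF inj_of_int_fun])
    then have "\<forall>t\<in>T. u t = 0"
      using in_span by (intro T_indep) simp
    then show "\<forall>y\<in>S. a y = 0"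
      using S_image by (auto simp: u_def inv_into_f_f[OF inj_of_int_fun])
  qed
  moreover have "S \<subseteq> A"
    by (simp add: S_def)
  ultimately show thesis
    using that T(4) by simp
qed

lemma quot_rank_add_dim_eq:
  assumes B: "int_submodule B" "B \<subseteq> A" and A: "of_int_fun ` A \<subseteq> Q.span G" "finite G"
  shows "quot_rank A B + Q.dim (of_int_fun ` B) = Q.dim (of_int_fun ` A)"
proof -
  let ?K = "{card S | S. finite S \<and> S \<subseteq> A \<and> independent_modulo B S}"
  let ?d = "Q.dim (of_int_fun ` A) - Q.dim (of_int_fun ` B)"
  have le: "k \<le> ?d" if "k \<in> ?K" for k
    using that independent_modulo_card_add_dim_le[OF B A] by fastforce
  obtain S where "finite S" "S \<subseteq> A" "independent_modulo B S"
    "card S + Q.dim (of_int_fun ` B) = Q.dim (of_int_fun ` A)"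
    using exists_independent_modulo[OF B(2) A] .
  then have "?d \<in> ?K" "Q.dim (of_int_fun ` B) \<le> Q.dim (of_int_fun ` A)"
    by (auto intro!: exI[of _ S])
  moreover have "finite ?K"
    using le by (auto intro: finite_subset[of _ "{..?d}"])
  ultimately have "Max ?K = ?d"
    using le by (intro Max_eqI) auto
  then show ?thesis
    using \<open>Q.dim _ \<le> _\<close> by (simp add: quot_rank_eq_Max)
qed

section \<open>Components of spanning subgraphs\<close>

lemma rtrancl_sym_add_edge:
  assumes "sym R"
  shows "(u, w) \<in> (R \<union> {(a, b), (b, a)})\<^sup>* \<longleftrightarrow>
    (u, w) \<in> R\<^sup>* \<or> ((u, a) \<in> R\<^sup>* \<and> (b, w) \<in> R\<^sup>*) \<or> ((u, b) \<in> R\<^sup>* \<and> (a, w) \<in> R\<^sup>*)"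
proof
  have sym: "(x, y) \<in> R\<^sup>* \<Longrightarrow> (y, x) \<in> R\<^sup>*" for x y
    using sym_rtrancl[OF assms] unfolding sym_def by blast
  assume "(u, w) \<in> (R \<union> {(a, b), (b, a)})\<^sup>*"
  then show "(u, w) \<in> R\<^sup>* \<or> ((u, a) \<in> R\<^sup>* \<and> (b, w) \<in> R\<^sup>*) \<or> ((u, b) \<in> R\<^sup>* \<and> (a, w) \<in> R\<^sup>*)"
    by (induct rule: rtrancl_induct) (auto intro: rtrancl_into_rtrancl sym)
next
  have "R\<^sup>* \<subseteq> (R \<union> {(a, b), (b, a)})\<^sup>*" "(a, b) \<in> (R \<union> {(a, b), (b, a)})\<^sup>*"
    "(b, a) \<in> (R \<union> {(a, b), (b, a)})\<^sup>*"
    by (auto intro: rtrancl_mono[THEN subsetD])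
  then show "(u, w) \<in> R\<^sup>* \<or> ((u, a) \<in> R\<^sup>* \<and> (b, w) \<in> R\<^sup>*) \<or> ((u, b) \<in> R\<^sup>* \<and> (a, w) \<in> R\<^sup>*)
    \<Longrightarrow> (u, w) \<in> (R \<union> {(a, b), (b, a)})\<^sup>*"
    by (blast intro: rtrancl_trans)
qed

locale finite_graph =
  fixes V :: "'v set" and es :: "('v \<times> 'v) list"
  assumes finite_V: "finite V" and edges_in_V: "set es \<subseteq> V \<times> V"
begin

abbreviation conn :: "nat set \<Rightarrow> ('v \<times> 'v) set" where
  "conn s \<equiv> comp_rel V es s"

abbreviation component :: "nat set \<Rightarrow> 'v \<Rightarrow> 'v set" where
  "component s v \<equiv> comp_of V es s v"

lemma edge_ends_in_V: "e < length es \<Longrightarrow> fst (es!e) \<in> V \<and> snd (es!e) \<in> V"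
  using edges_in_V nth_mem by fastforce

lemma sym_edge_rel: "sym (edge_rel es s)"
  unfolding edge_rel_def sym_def by blast

lemma equiv_conn: "equiv V (conn s)"
proof (rule equivI)
  show "conn s \<subseteq> V \<times> V" "refl_on V (conn s)"
    unfolding refl_on_def comp_rel_def by auto
  show "sym (conn s)"
    using sym_rtrancl[OF sym_edge_rel] unfolding sym_def comp_rel_def by blast
  show "trans (conn s)"
    unfolding trans_def comp_rel_def by (auto intro: rtrancl_trans)
qed

lemma mem_component: "w \<in> component s u \<longleftrightarrow> (u, w) \<in> conn s"
  unfolding comp_of_def by simp

lemma component_eq_iff: "u \<in> V \<Longrightarrow> w \<in> V \<Longrightarrow> component s u = component s w \<longleftrightarrow> (u, w) \<in> conn s"
  unfolding comp_of_def using equiv_class_eq_iff[OF equiv_conn] by blast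

lemma component_self: "u \<in> V \<Longrightarrow> u \<in> component s u"
  using equiv_class_self[OF equiv_conn] unfolding comp_of_def .

lemma component_subset: "component s u \<subseteq> V"
  unfolding comp_of_def comp_rel_def by blast

lemma component_eq_if_mem: "u \<in> V \<Longrightarrow> w \<in> component s u \<Longrightarrow> component s w = component s u"
  using component_eq_iff component_subset mem_component by blast

lemma comps_eq: "comps V es s = component s ` V"
  unfolding comps_def quotient_def comp_of_def by blast

lemma finite_comps: "finite (comps V es s)"
  unfolding comps_eq using finite_V by simp

lemma card_comps_le: "card (comps V es s) \<le> card V"
  unfolding comps_eq using finite_V card_image_le by blast

lemma component_eq_mono:
  assumes "s \<subseteq> s'" "u \<in> V" "w \<in> V" "component s u = component s w"
  shows "component s' u = component s' w"
proof -
  have "edge_rel es s \<subseteq> edge_rel es s'"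
    using assms(1) unfolding edge_rel_def by blast
  then have "conn s \<subseteq> conn s'"
    unfolding comp_rel_def using rtrancl_mono by blast
  then show ?thesis
    using assms component_eq_iff by blast
qed

lemma conn_insert:
  assumes e: "e < length es" and a: "a = fst (es!e)" and b: "b = snd (es!e)"
  shows "(u, w) \<in> conn (insert e s) \<longleftrightarrow>
    (u, w) \<in> conn s \<or> ((u, a) \<in> conn s \<and> (b, w) \<in> conn s) \<or> ((u, b) \<in> conn s \<and> (a, w) \<in> conn s)"
proof -
  have R: "edge_rel es (insert e s) = edge_rel es s \<union> {(a, b), (b, a)}"
    using e unfolding a b edge_rel_def by auto
  have "a \<in> V" "b \<in> V"
    using edge_ends_in_V[OF e] a b by simp_all
  then show ?thesis
    unfolding comp_rel_def R using rtrancl_sym_add_edge[OF sym_edge_rel[of s], of u w a b] by auto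
qed

lemma component_insert:
  assumes e: "e < length es" and a: "a = fst (es!e)" and b: "b = snd (es!e)" and v: "v \<in> V"
  shows "component (insert e s) v =
    (if component s v = component s a \<or> component s v = component s b
     then component s a \<union> component s b else component s v)"
proof -
  have "a \<in> V" "b \<in> V"
    using edge_ends_in_V[OF e] a b by simp_all
  then have "w \<in> component (insert e s) v \<longleftrightarrow> w \<in> component s v
      \<or> (component s v = component s a \<and> w \<in> component s b)
      \<or> (component s v = component s b \<and> w \<in> component s a)" for w
    unfolding mem_component conn_insert[OF e a b] using component_eq_iff[OF v] by blast
  moreover have "component s v = component s a \<Longrightarrow> w \<in> component s v \<longleftrightarrow> w \<in> component s a"
    and "component s v = component s b \<Longrightarrow> w \<in> component s v \<longleftrightarrow> w \<in> component s b" for w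
    by simp_all
  ultimately show ?thesis
    by (intro set_eqI) (simp only: if_split Un_iff, blast)
qed

section \<open>Adding an edge to an enhanced state\<close>

definition coarsen :: "nat set \<Rightarrow> 'v set \<Rightarrow> 'v set" where
  "coarsen s' C = component s' (SOME v. v \<in> C)"

lemma coarsen_component:
  assumes "s \<subseteq> s'" "v \<in> V"
  shows "coarsen s' (component s v) = component s' v"
proof -
  let ?w = "SOME w. w \<in> component s v"
  have "?w \<in> component s v"
    using component_self[OF assms(2)] by (rule someI)
  then have "?w \<in> V" "component s ?w = component s v"
    using component_subset component_eq_if_mem[OF assms(2)] by blast+
  then show ?thesis
    unfolding coarsen_def using component_eq_mono[OF assms(1)] assms(2) by blast
qed

lemma coarsen_in_comps: "s \<subseteq> s' \<Longrightarrow> C \<in> comps V es s \<Longrightarrow> coarsen s' C \<in> comps V es s'"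
  unfolding comps_eq by (auto simp: coarsen_component)

lemma coarsen_coarsen:
  "s \<subseteq> s1 \<Longrightarrow> s1 \<subseteq> s2 \<Longrightarrow> C \<in> comps V es s \<Longrightarrow> coarsen s2 (coarsen s1 C) = coarsen s2 C"
  unfolding comps_eq by (auto simp: coarsen_component)

lemma coarsen_insert:
  assumes e: "e < length es" and C: "C \<in> comps V es s"
    and C1: "C1 = component s (fst (es!e))" and C2: "C2 = component s (snd (es!e))"
  shows "coarsen (insert e s) C = (if C = C1 \<or> C = C2 then C1 \<union> C2 else C)"
proof -
  obtain v where v: "v \<in> V" "C = component s v"
    using C comps_eq by auto
  show ?thesis
    unfolding v(2) coarsen_component[OF subset_insertI v(1)] component_insert[OF e refl refl v(1)] C1 C2
    ..
qed

lemma union_of_components_not_component: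
  assumes "C \<in> comps V es s" "a \<in> V" "b \<in> V" "component s a \<noteq> component s b"
  shows "C \<noteq> component s a \<union> component s b"
proof
  assume C: "C = component s a \<union> component s b"
  obtain w where "w \<in> V" "C = component s w"
    using assms(1) comps_eq by auto
  then have "component s a = C" "component s b = C"
    using C component_self[OF assms(2)] component_self[OF assms(3)] component_eq_if_mem by blast+
  then show False
    using assms(4) by simp
qed

lemma state_e_eq:
  assumes X: "X \<subseteq> comps V es s" and e: "e < length es"
  shows "state_e V es (s, X) e = (if inj_on (coarsen (insert e s)) X
    then Some (insert e s, coarsen (insert e s) ` X) else None)"
proof -
  define C1 where "C1 = component s (fst (es!e))"
  define C2 where "C2 = component s (snd (es!e))"
  define g where "g C = (if C = C1 \<or> C = C2 then C1 \<union> C2 else C)" for C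
  have "\<forall>C\<in>X. coarsen (insert e s) C = g C"
    using coarsen_insert[OF e _ C1_def C2_def] X unfolding g_def by blast
  then have coarsen_g: "inj_on (coarsen (insert e s)) X = inj_on g X"
    "coarsen (insert e s) ` X = g ` X"
    by (auto cong: inj_on_cong image_cong)
  have not_union: "\<forall>C\<in>X. C \<noteq> C1 \<union> C2" if "C1 \<noteq> C2"
    using union_of_components_not_component[of _ s] X edge_ends_in_V[OF e] that
    unfolding C1_def C2_def by blast
  have state_e: "state_e V es (s, X) e = (if C1 = C2 then Some (insert e s, X)
      else if C1 \<in> X \<and> C2 \<in> X then None
      else if C1 \<in> X \<or> C2 \<in> X then Some (insert e s, insert (C1 \<union> C2) (X - {C1, C2}))
      else Some (insert e s, X - {C1, C2}))"
    unfolding state_e_def C1_def C2_def Let_def by simp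
  show ?thesis
    unfolding state_e coarsen_g
    using not_union by (auto simp: g_def inj_on_def)
qed

lemma state_e_in_comps:
  assumes "X \<subseteq> comps V es s" "e < length es" "state_e V es (s, X) e = Some T"
  shows "T = (insert e s, coarsen (insert e s) ` X)" "snd T \<subseteq> comps V es (fst T)"
    "card (snd T) = card X"
proof -
  have T: "T = (insert e s, coarsen (insert e s) ` X)" and inj: "inj_on (coarsen (insert e s)) X"
    using assms(3) by (simp_all add: state_e_eq[OF assms(1,2)] split: if_splits)
  then show "T = (insert e s, coarsen (insert e s) ` X)" "card (snd T) = card X"
    by (simp_all add: card_image)
  show "snd T \<subseteq> comps V es (fst T)"
    using T assms(1) coarsen_in_comps[OF subset_insertI] by auto
qed

text \<open>Both orders of adding e and f coarsen X directly to the components of the larger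
  edge set, so the result does not depend on the order.\<close>

lemma state_e_state_e:
  assumes X: "X \<subseteq> comps V es s" and e: "e < length es" and f: "f < length es"
  shows "Option.bind (state_e V es (s, X) e) (\<lambda>T. state_e V es T f) =
    (if inj_on (coarsen (insert f (insert e s))) X
     then Some (insert f (insert e s), coarsen (insert f (insert e s)) ` X) else None)"
proof -
  let ?s1 = "insert e s" and ?s2 = "insert f (insert e s)"
  have "\<forall>C\<in>X. (coarsen ?s2 \<circ> coarsen ?s1) C = coarsen ?s2 C"
    using X coarsen_coarsen[of s ?s1 ?s2] by auto
  then have comp_eq: "inj_on (coarsen ?s2 \<circ> coarsen ?s1) X = inj_on (coarsen ?s2) X"
    "coarsen ?s2 ` coarsen ?s1 ` X = coarsen ?s2 ` X"
    by (auto cong: inj_on_cong image_cong simp: image_comp)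
  show ?thesis
  proof (cases "inj_on (coarsen ?s1) X")
    case True
    have "coarsen ?s1 ` X \<subseteq> comps V es ?s1"
      using X coarsen_in_comps[of s ?s1] by auto
    then show ?thesis
      using True comp_eq comp_inj_on_iff[OF True, of "coarsen ?s2"]
      by (simp add: state_e_eq[OF X e] state_e_eq[OF _ f])
  next
    case False
    then show ?thesis
      using comp_eq inj_on_imageI2 by (metis bind.bind_lzero state_e_eq[OF X e])
  qed
qed

corollary state_e_commute:
  assumes "X \<subseteq> comps V es s" "e < length es" "f < length es"
  shows "Option.bind (state_e V es (s, X) e) (\<lambda>T. state_e V es T f) =
    Option.bind (state_e V es (s, X) f) (\<lambda>T. state_e V es T e)"
  using state_e_state_e[OF assms] state_e_state_e[OF assms(1,3,2)] by (simp add: insert_commute)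

abbreviation all_states :: "'v state set" where
  "all_states \<equiv> {(s, X). s \<subseteq> {..<length es} \<and> X \<subseteq> comps V es s}"

abbreviation free_edges :: "'v state \<Rightarrow> nat set" where
  "free_edges S \<equiv> {e. e < length es \<and> e \<notin> fst S}"

lemma finite_all_states: "finite all_states"
proof (rule finite_subset)
  show "all_states \<subseteq> Pow {..<length es} \<times> Pow (Pow V)"
    unfolding comps_eq using component_subset by fastforce
  show "finite (Pow {..<length es} \<times> Pow (Pow V))"
    using finite_V by simp
qed

lemma states_subset_all_states: "states V es i j \<subseteq> all_states"
  unfolding states_def by auto

lemma finite_states: "finite (states V es i j)"
  using finite_subset[OF states_subset_all_states finite_all_states] .

lemma state_e_in_states:
  assumes S: "S \<in> states V es i j" and e: "e \<in> free_edges S" and T: "state_e V es S e = Some T"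
  shows "T \<in> states V es (Suc i) j" "fst T = insert e (fst S)"
proof -
  obtain s X where SX: "S = (s, X)"
    by (cases S)
  then have s: "s \<subseteq> {..<length es}" "card s = i" and X: "X \<subseteq> comps V es s" "card X = j"
    using S unfolding states_def by auto
  have "finite s"
    using s(1) finite_subset by blast
  then show "T \<in> states V es (Suc i) j" "fst T = insert e (fst S)"
    using state_e_in_comps[OF X(1) _ T[unfolded SX]] e s X
    unfolding states_def SX by auto
qed

lemma state_e_in_all_states:
  assumes "S \<in> all_states" "e \<in> free_edges S" "state_e V es S e = Some T"
  shows "T \<in> all_states" "fst T = insert e (fst S)"
  using assms state_e_in_states[of S "card (fst S)" "card (snd S)" e T]
  unfolding states_def by auto

end

section \<open>The differential\<close>

lemma sum_sum_antisym_eq_zero: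
  fixes h :: "'i::linorder \<Rightarrow> 'i \<Rightarrow> 'a::ab_group_add"
  assumes A: "finite A" and antisym: "\<And>e f. e \<in> A \<Longrightarrow> f \<in> A \<Longrightarrow> e \<noteq> f \<Longrightarrow> h f e = - h e f"
  shows "(\<Sum>e\<in>A. \<Sum>f\<in>A - {e}. h e f) = 0"
proof -
  let ?L = "{(e, f). e \<in> A \<and> f \<in> A \<and> e < f}" and ?G = "{(e, f). e \<in> A \<and> f \<in> A \<and> f < e}"
  have fin: "finite ?L" "finite ?G"
    using A by (auto intro: finite_subset[of _ "A \<times> A"])
  have "(\<Sum>e\<in>A. \<Sum>f\<in>A - {e}. h e f) = (\<Sum>(e, f)\<in>Sigma A (\<lambda>e. A - {e}). h e f)"
    using A by (simp add: sum.Sigma)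
  also have "Sigma A (\<lambda>e. A - {e}) = ?L \<union> ?G"
    by auto
  also have "(\<Sum>(e, f)\<in>?L \<union> ?G. h e f) = (\<Sum>(e, f)\<in>?L. h e f) + (\<Sum>(e, f)\<in>?G. h e f)"
    using fin by (intro sum.union_disjoint) auto
  also have "?G = prod.swap ` ?L"
    by auto
  also have "(\<Sum>(e, f)\<in>prod.swap ` ?L. h e f) = (\<Sum>(e, f)\<in>?L. - h e f)"
    by (subst sum.reindex) (auto intro!: sum.cong antisym)
  finally show ?thesis
    by (simp add: sum_negf case_prod_unfold)
qed

lemma nbefore_insert:
  assumes "finite s" "e \<notin> s"
  shows "nbefore (insert e s) f = nbefore s f + (if e < f then 1 else 0)"
proof -
  have "{k \<in> insert e s. k < f} = (if e < f then insert e {k \<in> s. k < f} else {k \<in> s. k < f})"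
    by auto
  then show ?thesis
    using assms unfolding nbefore_def by simp
qed

text \<open>The differential with coefficients in any commutative ring: diff is its integer
  instance, and its rational instance is the differential of C(G) tensored with Q.\<close>

definition coboundary ::
    "'v set \<Rightarrow> ('v \<times> 'v) list \<Rightarrow> ('v state \<Rightarrow> 'r::comm_ring_1) \<Rightarrow> 'v state \<Rightarrow> 'r" where
  "coboundary V es f = (\<lambda>T. \<Sum>S\<in>{S. S \<in> (\<Union>i j. states V es i j)}.
       \<Sum>e\<in>{e. e < length es \<and> e \<notin> fst S}.
          (if state_e V es S e = Some T then f S * (-1) ^ nbefore (fst S) e else 0))"

lemma diff_eq_coboundary: "diff V es = coboundary V es"
  unfolding diff_def coboundary_def ..

lemma coboundary_add:
  "coboundary V es (\<lambda>S. f S + g S) = (\<lambda>T. coboundary V es f T + coboundary V es g T)"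
  by (auto simp: coboundary_def fun_eq_iff algebra_simps simp flip: sum.distrib intro!: sum.cong)

lemma coboundary_scale: "coboundary V es (\<lambda>S. c * f S) = (\<lambda>T. c * coboundary V es f T)"
  by (auto simp: coboundary_def fun_eq_iff sum_distrib_left mult.assoc intro!: sum.cong)

lemma coboundary_zero [simp]: "coboundary V es (\<lambda>_. 0) = (\<lambda>_. 0)"
  by (simp add: coboundary_def fun_eq_iff cong: if_cong)

lemma of_int_fun_coboundary: "of_int_fun (coboundary V es f) = coboundary V es (of_int_fun f)"
  by (auto simp: coboundary_def of_int_fun_def fun_eq_iff intro!: sum.cong)

lemma linear_coboundary: "Vector_Spaces.linear scaleQ scaleQ (coboundary (V :: 'v set) es)"
proof -
  have "coboundary V es (f + g) = coboundary V es f + coboundary V es g" for f g :: "'v state \<Rightarrow> rat"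
    by (simp add: plus_fun_def coboundary_add)
  moreover have "coboundary V es (scaleQ c f) = scaleQ c (coboundary V es f)" for c f
    by (simp add: scaleQ_def coboundary_scale)
  ultimately show ?thesis
    unfolding Vector_Spaces.linear_iff using Q.vector_space_axioms by blast
qed

context finite_graph
begin

definition incidence :: "'v state \<Rightarrow> 'v state \<Rightarrow> 'r::comm_ring_1" where
  "incidence S T =
    (\<Sum>e\<in>free_edges S. if state_e V es S e = Some T then (-1) ^ nbefore (fst S) e else 0)"

lemma coboundary_eq_sum_incidence: "coboundary V es f T = (\<Sum>S\<in>all_states. f S * incidence S T)"
proof -
  have "{S. S \<in> (\<Union>i j. states V es i j)} = all_states"
    unfolding states_def by auto
  then show ?thesis
    unfolding coboundary_def incidence_def sum_distrib_left
    by (auto intro!: sum.cong)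
qed

definition two_edge_coeff :: "'v state \<Rightarrow> 'v state \<Rightarrow> nat \<Rightarrow> nat \<Rightarrow> 'r::comm_ring_1" where
  "two_edge_coeff S U e f = (if Option.bind (state_e V es S e) (\<lambda>T. state_e V es T f) = Some U
     then (-1) ^ nbefore (fst S) e * (-1) ^ nbefore (insert e (fst S)) f else 0)"

lemma sum_incidence_incidence_eq:
  assumes S: "S \<in> all_states"
  shows "(\<Sum>T\<in>all_states. incidence S T * incidence T U)
    = (\<Sum>e\<in>free_edges S. \<Sum>f\<in>free_edges S - {e}. two_edge_coeff S U e f :: 'r::comm_ring_1)"
proof -
  let ?c = "\<lambda>e T. if state_e V es S e = Some T then (-1) ^ nbefore (fst S) e else 0 :: 'r"
  have step: "(\<Sum>T\<in>all_states. ?c e T * incidence T U) = (\<Sum>f\<in>free_edges S - {e}. two_edge_coeff S U e f)"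
    if e: "e \<in> free_edges S" for e
  proof (cases "state_e V es S e")
    case None
    then show ?thesis
      by (simp add: two_edge_coeff_def)
  next
    case (Some T)
    then have "T \<in> all_states" "fst T = insert e (fst S)" "free_edges T = free_edges S - {e}"
      using state_e_in_all_states[OF S e] by auto
    then have "(\<Sum>T'\<in>all_states. ?c e T' * incidence T' U) = (-1) ^ nbefore (fst S) e * incidence T U"
      using Some finite_all_states by (simp add: if_distrib[of "\<lambda>x. x * _"] cong: if_cong)
    also have "\<dots> = (\<Sum>f\<in>free_edges S - {e}. two_edge_coeff S U e f)"
      using Some \<open>fst T = _\<close> \<open>free_edges T = _\<close>
      by (simp add: incidence_def two_edge_coeff_def sum_distrib_left if_distrib[of "\<lambda>x. _ * x"]
          cong: if_cong)
    finally show ?thesis .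
  qed
  have "(\<Sum>T\<in>all_states. incidence S T * incidence T U)
      = (\<Sum>T\<in>all_states. \<Sum>e\<in>free_edges S. ?c e T * incidence T U)"
    by (simp add: incidence_def[of S] sum_distrib_right)
  also have "\<dots> = (\<Sum>e\<in>free_edges S. \<Sum>T\<in>all_states. ?c e T * incidence T U)"
    by (rule sum.swap)
  finally show ?thesis
    using step by simp
qed

lemma two_edge_coeff_antisym:
  assumes S: "S \<in> all_states" and ef: "e \<in> free_edges S" "f \<in> free_edges S" "e \<noteq> f"
  shows "two_edge_coeff S U f e = - (two_edge_coeff S U e f :: 'r::comm_ring_1)"
proof -
  obtain s X where SX: "S = (s, X)"
    by (cases S)
  have X: "X \<subseteq> comps V es s" and "finite s"
    using S SX finite_subset[of s "{..<length es}"] by auto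
  have "Option.bind (state_e V es S f) (\<lambda>T. state_e V es T e) =
    Option.bind (state_e V es S e) (\<lambda>T. state_e V es T f)"
    using state_e_commute[OF X] ef SX by simp
  moreover have "(-1::'r) ^ nbefore s f * (-1) ^ nbefore (insert f s) e
    = - ((-1) ^ nbefore s e * (-1) ^ nbefore (insert e s) f)"
    using ef SX by (auto simp: nbefore_insert[OF \<open>finite s\<close>] power_add)
  ultimately show ?thesis
    by (simp add: two_edge_coeff_def SX)
qed

lemma sum_incidence_incidence:
  assumes "S \<in> all_states"
  shows "(\<Sum>T\<in>all_states. incidence S T * incidence T U) = (0::'r::comm_ring_1)"
  unfolding sum_incidence_incidence_eq[OF assms]
proof (rule sum_sum_antisym_eq_zero)
  show "finite (free_edges S)"
    by simp
qed (rule two_edge_coeff_antisym[OF assms])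

theorem coboundary_coboundary: "coboundary V es (coboundary V es f) = (\<lambda>_. 0 :: 'r::comm_ring_1)"
proof
  fix U
  have "coboundary V es (coboundary V es f) U
      = (\<Sum>T\<in>all_states. \<Sum>S\<in>all_states. f S * (incidence S T * incidence T U))"
    by (simp add: coboundary_eq_sum_incidence sum_distrib_right mult.assoc)
  also have "\<dots> = (\<Sum>S\<in>all_states. f S * (\<Sum>T\<in>all_states. incidence S T * incidence T U))"
    by (subst sum.swap) (simp add: sum_distrib_left)
  also have "\<dots> = 0"
    by (simp add: sum_incidence_incidence)
  finally show "coboundary V es (coboundary V es f) U = 0" .
qed

lemma coboundary_support:
  assumes f: "\<And>S. f S \<noteq> 0 \<Longrightarrow> S \<in> states V es i j" and T: "coboundary V es f T \<noteq> 0"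
  shows "T \<in> states V es (Suc i) j"
proof -
  obtain S where "f S * incidence S T \<noteq> 0"
    using sum.not_neutral_contains_not_neutral T unfolding coboundary_eq_sum_incidence by blast
  then have S: "f S \<noteq> 0" "incidence S T \<noteq> (0 :: 'a)"
    by auto
  obtain e where "e \<in> free_edges S"
    "(if state_e V es S e = Some T then (-1) ^ nbefore (fst S) e else 0) \<noteq> (0 :: 'a)"
    using sum.not_neutral_contains_not_neutral S(2) unfolding incidence_def by blast
  then have "e \<in> free_edges S" "state_e V es S e = Some T"
    by (auto split: if_splits)
  then show ?thesis
    using state_e_in_states(1) f[OF S(1)] by blast
qed

lemma coboundary_top_degree:
  assumes f: "\<And>S. f S \<noteq> 0 \<Longrightarrow> S \<in> states V es (length es) j"
  shows "coboundary V es f = (\<lambda>_. 0)"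
proof -
  have no_free: "free_edges S = {}" if "f S \<noteq> 0" for S
  proof -
    have "fst S \<subseteq> {..<length es}" "card (fst S) = length es"
      using f[OF that] unfolding states_def by auto
    then have "fst S = {..<length es}"
      using card_subset_eq[of "{..<length es}"] by simp
    then show ?thesis
      by auto
  qed
  have "f S * incidence S T = 0" for S T
  proof (cases "f S = 0")
    case False
    then show ?thesis
      unfolding incidence_def no_free[OF False] by simp
  qed simp
  then show ?thesis
    by (simp add: coboundary_eq_sum_incidence fun_eq_iff)
qed

end

section \<open>The Euler characteristic\<close>

lemma alternating_sum_telescope:
  "(\<Sum>i\<le>n. (-1) ^ i * (x i + x (Suc i))) = x 0 + (-1) ^ n * (x (Suc n) :: int)"
  by (induct n) (simp_all add: algebra_simps)

text \<open>In degree i, c i, z i, b i and r i are the ranks of the chains, cycles, boundaries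
  and homology of a complex that vanishes outside the degrees 0..n.\<close>

lemma euler_characteristic:
  fixes r z b c :: "nat \<Rightarrow> nat"
  assumes "\<And>i. r i + b i = z i" "\<And>i. z i + b (Suc i) = c i" "b 0 = 0" "b (Suc n) = 0"
  shows "(\<Sum>i\<le>n. (-1) ^ i * int (r i)) = (\<Sum>i\<le>n. (-1) ^ i * int (c i))"
proof -
  have "int (r i) = int (c i) - (int (b i) + int (b (Suc i)))" for i
    using assms(1,2)[of i] by linarith
  then have "(\<Sum>i\<le>n. (-1) ^ i * int (r i))
      = (\<Sum>i\<le>n. (-1) ^ i * int (c i)) - (\<Sum>i\<le>n. (-1) ^ i * (int (b i) + int (b (Suc i))))"
    by (simp add: right_diff_distrib sum_subtractf)
  then show ?thesis
    using assms(3,4) alternating_sum_telescope[of "\<lambda>i. int (b i)" n] by simp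
qed

context finite_graph
begin

lemma diff_chains: "f \<in> chains V es i j \<Longrightarrow> diff V es f \<in> chains V es (Suc i) j"
  unfolding chains_def diff_eq_coboundary using coboundary_support by blast

lemma int_submodule_chains: "int_submodule (chains V es i j)"
  unfolding int_submodule_def chains_def by (auto simp: not_le) (metis add_0)

lemma int_submodule_boundaries: "int_submodule (boundaries V es i j)"
proof (cases i)
  case 0
  then show ?thesis
    by (simp add: int_submodule_def boundaries_def)
next
  case (Suc k)
  then have "boundaries V es i j = coboundary V es ` chains V es k j"
    by (simp add: boundaries_def diff_eq_coboundary)
  then show ?thesis
    by (simp add: int_submodule_image[OF int_submodule_chains coboundary_add coboundary_scale])
qed

lemma boundaries_subset_cycles: "boundaries V es i j \<subseteq> cycles V es i j"
proof (cases i)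
  case 0
  then show ?thesis
    by (simp add: boundaries_def cycles_def chains_def diff_eq_coboundary)
next
  case (Suc k)
  then show ?thesis
    using diff_chains[of _ k j] coboundary_coboundary
    by (auto simp: boundaries_def cycles_def diff_eq_coboundary)
qed

lemma of_int_fun_chains_subset_span: "of_int_fun ` chains V es i j \<subseteq> Q.span (point_fun ` states V es i j)"
proof
  fix g assume "g \<in> of_int_fun ` chains V es i j"
  then obtain f where "f \<in> chains V es i j" "g = of_int_fun f"
    by blast
  then show "g \<in> Q.span (point_fun ` states V es i j)"
    by (intro in_span_point_funs[OF finite_states]) (auto simp: chains_def of_int_fun_def)
qed

lemma point_funs_subset_chains: "point_fun ` states V es i j \<subseteq> of_int_fun ` chains V es i j"
proof
  fix p assume "p \<in> point_fun ` states V es i j"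
  then obtain x where x: "x \<in> states V es i j" "p = point_fun x" by blast
  then have "(\<lambda>y. if y = x then 1 else 0) \<in> chains V es i j" "p = of_int_fun (\<lambda>y. if y = x then 1 else 0)"
    by (auto simp: chains_def point_fun_def of_int_fun_def fun_eq_iff)
  then show "p \<in> of_int_fun ` chains V es i j" by blast
qed

lemma dim_chains: "Q.dim (of_int_fun ` chains V es i j) = card (states V es i j)"
  using Q.basis_card_eq_dim[OF point_funs_subset_chains of_int_fun_chains_subset_span
      independent_point_funs[OF finite_states]] card_image[OF inj_point_fun[of "states V es i j"]]
  by simp

lemma span_cycles:
  "Q.span (of_int_fun ` cycles V es i j)
    = {g \<in> Q.span (of_int_fun ` chains V es i j). coboundary V es g = 0}"
  (is "_ = ?Z")
proof
  have "?Z = Q.span (of_int_fun ` chains V es i j) \<inter> {g. coboundary V es g = 0}"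
    by blast
  then have "Q.subspace ?Z"
    using QQ.linear_subspace_kernel[OF linear_coboundary[of V es]] by (simp add: Q.subspace_inter)
  moreover have "of_int_fun ` cycles V es i j \<subseteq> ?Z"
    by (auto simp: cycles_def diff_eq_coboundary simp flip: of_int_fun_coboundary intro: Q.span_base)
  ultimately show "Q.span (of_int_fun ` cycles V es i j) \<subseteq> ?Z"
    by (rule Q.span_minimal[rotated])
  show "?Z \<subseteq> Q.span (of_int_fun ` cycles V es i j)"
  proof
    fix g assume g: "g \<in> ?Z"
    then obtain D h where D: "D > 0" "h \<in> chains V es i j" "scaleQ (of_int D) g = of_int_fun h"
      using int_submodule_saturated[OF int_submodule_chains] by blast
    have "of_int_fun (diff V es h) = scaleQ (of_int D) (coboundary V es g)"
      unfolding diff_eq_coboundary of_int_fun_coboundary D(3)[symmetric]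
      by (rule QQ.linear_scale[OF linear_coboundary[of V es]])
    also have "\<dots> = of_int_fun (\<lambda>_. 0)"
      using g by (simp add: scaleQ_def zero_fun_def)
    finally have "diff V es h = (\<lambda>_. 0)"
      by (simp only: of_int_fun_eq_iff)
    then have "h \<in> cycles V es i j"
      using D(2) by (simp add: cycles_def)
    then have "scaleQ (1 / of_int D) (of_int_fun h) \<in> Q.span (of_int_fun ` cycles V es i j)"
      by (intro Q.span_scale Q.span_base) simp
    moreover have "scaleQ (1 / of_int D) (of_int_fun h) = g"
      using D(1) by (simp flip: D(3) add: fun_eq_iff)
    ultimately show "g \<in> Q.span (of_int_fun ` cycles V es i j)"
      by simp
  qed
qed

lemma span_boundaries_Suc:
  "Q.span (of_int_fun ` boundaries V es (Suc i) j) = coboundary V es ` Q.span (of_int_fun ` chains V es i j)"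
proof -
  have "of_int_fun ` boundaries V es (Suc i) j = coboundary V es ` of_int_fun ` chains V es i j"
    by (auto simp: boundaries_def diff_eq_coboundary of_int_fun_coboundary image_image)
  then show ?thesis
    by (simp add: QQ.linear_span_image[OF linear_coboundary[of V es]])
qed

lemma dim_cycles_add_dim_boundaries:
  "Q.dim (of_int_fun ` cycles V es i j) + Q.dim (of_int_fun ` boundaries V es (Suc i) j)
    = card (states V es i j)"
proof -
  have "Q.span (of_int_fun ` chains V es i j) \<subseteq> Q.span (point_fun ` states V es i j)"
    using Q.span_minimal[OF of_int_fun_chains_subset_span Q.subspace_span] .
  from QQ.dim_eq_dim_kernel_add_dim_image[OF linear_coboundary[of V es] Q.subspace_span this]
  show ?thesis
    by (simp add: finite_states dim_chains span_cycles[symmetric] span_boundaries_Suc[symmetric])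
qed

lemma hom_rank_add_dim_boundaries:
  "hom_rank V es i j + Q.dim (of_int_fun ` boundaries V es i j) = Q.dim (of_int_fun ` cycles V es i j)"
  unfolding hom_rank_def
proof (rule quot_rank_add_dim_eq[OF int_submodule_boundaries boundaries_subset_cycles])
  show "of_int_fun ` cycles V es i j \<subseteq> Q.span (point_fun ` states V es i j)"
    using of_int_fun_chains_subset_span by (auto simp: cycles_def)
qed (simp add: finite_states)

lemma dim_boundaries_0: "Q.dim (of_int_fun ` boundaries V es 0 j) = 0"
  by (simp add: boundaries_def Q_dim_zero)

lemma dim_boundaries_top: "Q.dim (of_int_fun ` boundaries V es (Suc (length es)) j) = 0"
proof -
  have "diff V es ` chains V es (length es) j = {\<lambda>_. 0}"
  proof
    show "diff V es ` chains V es (length es) j \<subseteq> {\<lambda>_. 0}"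
    proof
      fix g assume "g \<in> diff V es ` chains V es (length es) j"
      then obtain f where "f \<in> chains V es (length es) j" "g = coboundary V es f"
        by (auto simp: diff_eq_coboundary)
      then show "g \<in> {\<lambda>_. 0}"
        using coboundary_top_degree[of f j] by (auto simp: chains_def)
    qed
    have "diff V es (\<lambda>_. 0) \<in> diff V es ` chains V es (length es) j"
      by (intro imageI) (simp add: chains_def)
    then show "{\<lambda>_. 0} \<subseteq> diff V es ` chains V es (length es) j"
      by (simp add: diff_eq_coboundary)
  qed
  then show ?thesis
    by (simp add: boundaries_def Q_dim_zero)
qed

theorem euler_characteristic_states:
  "(\<Sum>i\<le>length es. (-1) ^ i * int (hom_rank V es i j))
    = (\<Sum>i\<le>length es. (-1) ^ i * int (card (states V es i j)))"
  by (rule euler_characteristic[of "\<lambda>i. hom_rank V es i j" "\<lambda>i. Q.dim (of_int_fun ` boundaries V es i j)"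
        "\<lambda>i. Q.dim (of_int_fun ` cycles V es i j)" "\<lambda>i. card (states V es i j)",
        OF hom_rank_add_dim_boundaries dim_cycles_add_dim_boundaries dim_boundaries_0 dim_boundaries_top])

end

section \<open>Counting states\<close>

lemma sum_monom_card_Pow:
  assumes "finite K"
  shows "(\<Sum>X\<in>Pow K. monom (1::'a::comm_semiring_1) (card X)) = [:1, 1:] ^ card K"
  using assms
proof (induct K rule: finite_induct)
  case empty
  then show ?case
    by (simp add: monom_0 one_pCons)
next
  case (insert k K)
  have inj: "inj_on (insert k) (Pow K)"
    using insert.hyps(2) by (auto simp: inj_on_def)
  have "(\<Sum>X\<in>Pow (insert k K). monom (1::'a) (card X))
      = (\<Sum>X\<in>Pow K. monom 1 (card X)) + (\<Sum>X\<in>Pow K. monom 1 (card (insert k X)))"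
    unfolding Pow_insert using insert.hyps
    by (subst sum.union_disjoint) (auto simp: sum.reindex[OF inj])
  also have "(\<Sum>X\<in>Pow K. monom (1::'a) (card (insert k X))) = [:0, 1:] * (\<Sum>X\<in>Pow K. monom 1 (card X))"
  proof -
    have "monom (1::'a) (card (insert k X)) = [:0, 1:] * monom 1 (card X)" if "X \<in> Pow K" for X
    proof -
      have "finite X" "k \<notin> X"
        using that insert.hyps(1,2) finite_subset[of X K] by auto
      then show ?thesis
        by (simp add: monom_Suc)
    qed
    then show ?thesis
      by (simp add: sum_distrib_left)
  qed
  finally show ?case
    using insert by (simp add: algebra_simps one_pCons)
qed

lemma pcompose_monom: "pcompose (monom c n) q = smult c (q ^ n)"
  for q :: "'a::comm_ring_1 poly"
  by (induct n) (simp_all add: monom_0 monom_Suc pcompose_pCons mult_smult_right)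

lemma smult_sum_right: "smult c (sum f S) = (\<Sum>x\<in>S. smult c (f x))"
  by (induct S rule: infinite_finite_induct) (simp_all add: smult_add_right)

lemma sum_smult_sum_monom:
  "(\<Sum>i\<in>I. smult (g i) (\<Sum>j\<in>J. monom (x i j) j)) = (\<Sum>j\<in>J. monom (\<Sum>i\<in>I. g i * x i j) j)"
  for g :: "nat \<Rightarrow> 'a::comm_ring_1"
  by (simp add: smult_sum_right smult_monom monom_sum sum.swap[of _ I])

context finite_graph
begin

lemma sum_monom_card_states:
  "(\<Sum>j\<le>card V. monom (int (card (states V es i j))) j)
     = (\<Sum>s\<in>{s \<in> Pow {..<length es}. card s = i}. [:1, 1:] ^ card (comps V es s))"
proof -
  let ?I = "{s \<in> Pow {..<length es}. card s = i}"
  let ?S = "Sigma ?I (\<lambda>s. Pow (comps V es s))"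
  have fin: "finite ?I" "finite ?S"
    using finite_comps by (auto intro: finite_subset[of _ "Pow {..<length es}"])
  have card_le: "card X \<le> card V" if "X \<subseteq> comps V es s" for X s
    using card_mono[OF finite_comps that] card_comps_le[of s] by simp
  have "monom (int (card (states V es i j))) j = (\<Sum>S\<in>{S \<in> ?S. card (snd S) = j}. monom 1 (card (snd S)))"
    for j
  proof -
    have "states V es i j = {S \<in> ?S. card (snd S) = j}"
      by (auto simp: states_def)
    moreover have "(\<Sum>S\<in>states V es i j. monom (1::int) (card (snd S))) = (\<Sum>S\<in>states V es i j. monom 1 j)"
      by (intro sum.cong) (auto simp: states_def)
    moreover have "monom (int (card (states V es i j))) j = monom (\<Sum>S\<in>states V es i j. 1) j"
      by simp
    ultimately show ?thesis
      by (simp only: monom_sum)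
  qed
  then have "(\<Sum>j\<le>card V. monom (int (card (states V es i j))) j)
      = (\<Sum>j\<le>card V. \<Sum>S\<in>{S \<in> ?S. card (snd S) = j}. monom 1 (card (snd S)))"
    by simp
  also have "\<dots> = (\<Sum>S\<in>?S. monom 1 (card (snd S)))"
    using fin(2) card_le by (intro sum.group) auto
  also have "\<dots> = (\<Sum>s\<in>?I. \<Sum>X\<in>Pow (comps V es s). monom 1 (card X))"
    using fin(1) finite_comps by (simp add: sum.Sigma case_prod_unfold)
  also have "\<dots> = (\<Sum>s\<in>?I. [:1, 1:] ^ card (comps V es s))"
    using finite_comps by (simp add: sum_monom_card_Pow)
  finally show ?thesis .
qed

end

theorem mainTheorem2:
  fixes V :: "'v set" and es :: "('v \<times> 'v) list"
  assumes "finite V" and "set es \<subseteq> V \<times> V"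
  shows "(\<Sum>i\<le>length es. smult ((-1) ^ i) (qdim_H V es i))
           = pcompose (chromatic_poly V es) [:1, 1:]"
proof -
  interpret finite_graph V es
    using assms by unfold_locales
  let ?k = "\<lambda>s. card (comps V es s)"
  have "(\<Sum>i\<le>length es. smult ((-1) ^ i) (qdim_H V es i))
      = (\<Sum>j\<le>card V. monom (\<Sum>i\<le>length es. (-1) ^ i * int (hom_rank V es i j)) j)"
    unfolding qdim_H_def by (rule sum_smult_sum_monom)
  also have "\<dots> = (\<Sum>i\<le>length es. smult ((-1) ^ i) (\<Sum>j\<le>card V. monom (int (card (states V es i j))) j))"
    unfolding euler_characteristic_states by (rule sum_smult_sum_monom[symmetric])
  also have "\<dots> = (\<Sum>i\<le>length es. \<Sum>s\<in>{s \<in> Pow {..<length es}. card s = i}.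
      smult ((-1) ^ card s) ([:1, 1:] ^ ?k s))"
    by (simp add: sum_monom_card_states smult_sum_right)
  also have "\<dots> = (\<Sum>s\<in>Pow {..<length es}. smult ((-1) ^ card s) ([:1, 1:] ^ ?k s))"
    by (rule sum.group) (auto intro: card_mono[of "{..<length es}", simplified])
  also have "\<dots> = pcompose (chromatic_poly V es) [:1, 1:]"
    by (simp add: chromatic_poly_def pcompose_sum pcompose_monom)
  finally show ?thesis .
qed

end
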